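(* An nfa $N$ accepting a regular language $L$ is subatomic if and only if the transition monoid of the dfa $\mathrm{rsc}(N^r)$ is isomorphic (as a monoid) to the syntactic monoid $\mathrm{Syn}(L^r)$.
   Context: An nfa $N=(Q,\delta,I,F)$: finite states, transition relations $\delta_a$, initial states $I$, final states $F$ (several initial states allowed). $N^r$ is the reverse nfa (transitions reversed, $I$ and $F$ swapped), accepting $L^r=\{w^r:w\in L\}$. $\mathrm{rsc}(N)$ is the dfa whose states are the subsets of $Q$ reachable from $I$ under $X\mapsto\delta_a[X]$, initial state $I$, final states the subsets meeting $F$. $N$ is subatomic if every state of $N$ accepts a language in $\mathrm{BLRQ}(L)$, the boolean subalgebra of $\mathcal{P}(\Sigma^* )$ generated by all two-sided derivatives $u^{-1}Lv^{-1}=\{w:uwv\in L\}$. The transition monoid of a dfa $D$ with transition functions $\delta_a$ is $\{\delta_w:w\in\Sigma^*\}$, where $\delta_w=\delta_{a_n}\circ\cdots\circ\delta_{a_1}$ for $w=a_1\cdots a_n$, with multiplication $\delta_v\cdot\delta_w=\delta_{vw}$ and unit $\delta_\epsilon$. The syntactic monoid $\mathrm{Syn}(K)$ is $\Sigma^*$ modulo the congruence $v\equiv_K w\iff\forall x,y\,(xvy\in K\Leftrightarrow xwy\in K)$. *)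

theory Defs
  imports "HOL-Algebra.Group"
begin

record ('s, 'a) nfa =
  states :: "'s set"
  trans  :: "'a \<Rightarrow> ('s \<times> 's) set"
  init   :: "'s set"
  final  :: "'s set"

definition nfa :: "('s, 'a) nfa \<Rightarrow> bool" where
  "nfa N \<longleftrightarrow> finite (states N) \<and> init N \<subseteq> states N \<and> final N \<subseteq> states N
     \<and> (\<forall>a. trans N a \<subseteq> states N \<times> states N)"

definition steps :: "('s, 'a) nfa \<Rightarrow> 'a list \<Rightarrow> 's set \<Rightarrow> 's set" where
  "steps N w X = fold (\<lambda>a Y. trans N a `` Y) w X"

definition nfa_lang :: "('s, 'a) nfa \<Rightarrow> 'a list set" where
  "nfa_lang N = {w. steps N w (init N) \<inter> final N \<noteq> {}}"

definition state_lang :: "('s, 'a) nfa \<Rightarrow> 's \<Rightarrow> 'a list set" where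
  "state_lang N q = {w. steps N w {q} \<inter> final N \<noteq> {}}"

definition rev_nfa :: "('s, 'a) nfa \<Rightarrow> ('s, 'a) nfa" where
  "rev_nfa N = \<lparr>states = states N, trans = (\<lambda>a. (trans N a)\<inverse>),
                init = final N, final = init N\<rparr>"

inductive_set BLRQ :: "'a list set \<Rightarrow> 'a list set set" for L where
  quot: "{w. u @ w @ v \<in> L} \<in> BLRQ L"
| empty: "{} \<in> BLRQ L"
| compl: "X \<in> BLRQ L \<Longrightarrow> - X \<in> BLRQ L"
| union: "X \<in> BLRQ L \<Longrightarrow> Y \<in> BLRQ L \<Longrightarrow> X \<union> Y \<in> BLRQ L"

definition subatomic :: "('s, 'a) nfa \<Rightarrow> bool" where
  "subatomic N \<longleftrightarrow> (\<forall>q \<in> states N. state_lang N q \<in> BLRQ (nfa_lang N))"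

record ('q, 'a) dfa =
  dstates :: "'q set"
  dtrans  :: "'a \<Rightarrow> 'q \<Rightarrow> 'q"
  dinit   :: "'q"
  dfinal  :: "'q set"

definition dsteps :: "('q, 'a) dfa \<Rightarrow> 'a list \<Rightarrow> 'q \<Rightarrow> 'q" where
  "dsteps D w = fold (dtrans D) w"

definition rsc :: "('s, 'a) nfa \<Rightarrow> ('s set, 'a) dfa" where
  "rsc N = \<lparr>dstates = {steps N w (init N) | w. True},
            dtrans = (\<lambda>a X. trans N a `` X),
            dinit = init N,
            dfinal = {X \<in> {steps N w (init N) | w. True}. X \<inter> final N \<noteq> {}}\<rparr>"

text \<open>Transition monoid: delta_v \<cdot> delta_w = delta_{vw} = delta_w o delta_v,
  functions taken on the state set of the dfa.\<close>
definition trans_monoid :: "('q, 'a) dfa \<Rightarrow> ('q \<Rightarrow> 'q) monoid" where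
  "trans_monoid D = \<lparr>carrier = {restrict (dsteps D w) (dstates D) | w. True},
                     mult = (\<lambda>f g. restrict (g \<circ> f) (dstates D)),
                     one = restrict id (dstates D)\<rparr>"

definition syn_cong :: "'a list set \<Rightarrow> ('a list \<times> 'a list) set" where
  "syn_cong K = {(v, w). \<forall>x y. x @ v @ y \<in> K \<longleftrightarrow> x @ w @ y \<in> K}"

definition syn_monoid :: "'a list set \<Rightarrow> 'a list set monoid" where
  "syn_monoid K = \<lparr>carrier = UNIV // syn_cong K,
                   mult = (\<lambda>X Y. syn_cong K `` {(SOME x. x \<in> X) @ (SOME y. y \<in> Y)}),
                   one = syn_cong K `` {[]}\<rparr>"

end

theory Submission
  imports Defs
begin

text \<open>Write \<open>L\<^sub>q\<close> for the language of a state \<open>q\<close>. The state of \<open>rsc(N\<^sup>r)\<close> reached by \<open>x\<close> is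
  \<open>{q. rev x \<in> L\<^sub>q}\<close>, so the transition of a word \<open>v\<close> is determined by, and determines, the
  left quotients \<open>(rev v)\<^sup>-\<^sup>1 L\<^sub>q\<close> for all \<open>q\<close>. These quotients determine the syntactic class of
  \<open>rev v\<close> in \<open>L\<close>, so the transition monoid maps onto \<open>Syn(L\<^sup>r)\<close>; being finite, it is isomorphic
  to it iff this map is injective, i.e. iff every \<open>L\<^sub>q\<close> is a union of syntactic classes of \<open>L\<close>.
  Since \<open>L\<close> has only finitely many two-sided quotients, the unions of syntactic classes are
  exactly the members of \<open>BLRQ(L)\<close>: each class is a finite boolean combination of quotients.\<close>

lemma steps_Nil [simp]: "steps N [] X = X"
  by (simp add: steps_def)

lemma steps_Cons [simp]: "steps N (a # w) X = steps N w (trans N a `` X)"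
  by (simp add: steps_def)

lemma steps_append: "steps N (u @ v) X = steps N v (steps N u X)"
  by (simp add: steps_def)

lemma steps_eq_UN_singletons: "steps N w X = (\<Union>q\<in>X. steps N w {q})"
proof (induction w arbitrary: X)
  case (Cons a w)
  have "steps N (a # w) X = (\<Union>p\<in>trans N a `` X. steps N w {p})"
    using Cons.IH[of "trans N a `` X"] by simp
  also have "\<dots> = (\<Union>q\<in>X. \<Union>p\<in>trans N a `` {q}. steps N w {p})"
    by blast
  also have "\<dots> = (\<Union>q\<in>X. steps N (a # w) {q})"
    using Cons.IH[of "trans N a `` {_}"] by simp
  finally show ?case .
qed simp

lemma steps_subset_states: "nfa N \<Longrightarrow> X \<subseteq> states N \<Longrightarrow> steps N w X \<subseteq> states N"
proof (induction w arbitrary: X)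
  case (Cons a w)
  then have "trans N a `` X \<subseteq> states N"
    unfolding nfa_def by blast
  with Cons show ?case by simp
qed simp

lemma steps_empty [simp]: "steps N w {} = {}"
  by (induction w) auto

lemma state_lang_notin_states:
  assumes "nfa N" and "q \<notin> states N"
  shows "state_lang N q = {}"
proof -
  have "trans N a `` {q} = {}" for a
    using assms unfolding nfa_def by blast
  moreover have "q \<notin> final N"
    using assms unfolding nfa_def by blast
  ultimately have "steps N w {q} \<inter> final N = {}" for w
    by (cases w) auto
  then show ?thesis
    unfolding state_lang_def by blast
qed

lemma append_in_nfa_lang_iff:
  "x @ u \<in> nfa_lang N \<longleftrightarrow> (\<exists>p\<in>steps N x (init N). u \<in> state_lang N p)"
  using steps_eq_UN_singletons[of N u "steps N x (init N)"]
  by (auto simp: nfa_lang_def state_lang_def steps_append)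

lemma steps_rev_nfa: "steps (rev_nfa N) x Y = {q. steps N (rev x) {q} \<inter> Y \<noteq> {}}"
proof (induction x arbitrary: Y)
  case (Cons a x)
  have "steps (rev_nfa N) (a # x) Y = {q. steps N (rev x) {q} \<inter> (trans N a)\<inverse> `` Y \<noteq> {}}"
    using Cons.IH by (simp add: rev_nfa_def)
  also have "\<dots> = {q. steps N (rev (a # x)) {q} \<inter> Y \<noteq> {}}"
    by (auto simp: steps_append)
  finally show ?case .
qed auto

lemma nfa_rev_nfa: "nfa N \<Longrightarrow> nfa (rev_nfa N)"
  unfolding nfa_def rev_nfa_def by auto

lemma finite_quotients_nfa_lang:
  assumes "nfa N"
  shows "finite {{w. u @ w @ v \<in> nfa_lang N} | u v. True}"
proof -
  let ?quot = "\<lambda>(A, B). {w. steps N w A \<inter> B \<noteq> {}}"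
  have "{w. u @ w @ v \<in> nfa_lang N} \<in> ?quot ` (Pow (states N) \<times> Pow (states N))" for u v
  proof -
    let ?A = "steps N u (init N)"
    let ?B = "{q \<in> states N. v \<in> state_lang N q}"
    have A: "?A \<subseteq> states N"
      using assms steps_subset_states unfolding nfa_def by blast
    then have "steps N w ?A \<subseteq> states N" for w
      using assms steps_subset_states by blast
    then have "u @ w @ v \<in> nfa_lang N \<longleftrightarrow> steps N w ?A \<inter> ?B \<noteq> {}" for w
      using append_in_nfa_lang_iff[of "u @ w" v N] by (auto simp: steps_append)
    then have "{w. u @ w @ v \<in> nfa_lang N} = ?quot (?A, ?B)"
      by simp
    with A show ?thesis by blast
  qed
  then have "{{w. u @ w @ v \<in> nfa_lang N} | u v. True}
      \<subseteq> ?quot ` (Pow (states N) \<times> Pow (states N))"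
    by blast
  moreover have "finite (states N)"
    using assms unfolding nfa_def by blast
  ultimately show ?thesis
    by (meson finite_Pow_iff finite_SigmaI finite_imageI finite_subset)
qed

lemma equiv_syn_cong: "equiv UNIV (syn_cong K)"
  unfolding equiv_def refl_on_def sym_def Relation.trans_def syn_cong_def by auto

lemma syn_cong_append_right: "(u, u') \<in> syn_cong K \<Longrightarrow> (u @ y, u' @ y) \<in> syn_cong K"
  unfolding syn_cong_def
proof clarify
  fix x z
  assume "\<forall>x y. x @ u @ y \<in> K \<longleftrightarrow> x @ u' @ y \<in> K"
  from this[rule_format, of x "y @ z"] show "x @ (u @ y) @ z \<in> K \<longleftrightarrow> x @ (u' @ y) @ z \<in> K"
    by simp
qed

lemma syn_cong_append_left: "(u, u') \<in> syn_cong K \<Longrightarrow> (y @ u, y @ u') \<in> syn_cong K"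
  unfolding syn_cong_def
proof clarify
  fix x z
  assume "\<forall>x y. x @ u @ y \<in> K \<longleftrightarrow> x @ u' @ y \<in> K"
  from this[rule_format, of "x @ y" z] show "x @ (y @ u) @ z \<in> K \<longleftrightarrow> x @ (y @ u') @ z \<in> K"
    by simp
qed

lemma syn_cong_rev_image: "(v, w) \<in> syn_cong (rev ` L) \<longleftrightarrow> (rev v, rev w) \<in> syn_cong L"
proof -
  have rev_image: "z \<in> rev ` L \<longleftrightarrow> rev z \<in> L" for z
    by (metis image_iff rev_rev_ident)
  have "(v, w) \<in> syn_cong (rev ` L) \<longleftrightarrow>
      (\<forall>x y. rev y @ rev v @ rev x \<in> L \<longleftrightarrow> rev y @ rev w @ rev x \<in> L)"
    unfolding syn_cong_def by (simp add: rev_image)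
  also have "\<dots> \<longleftrightarrow> (\<forall>x y. x @ rev v @ y \<in> L \<longleftrightarrow> x @ rev w @ y \<in> L)"
    by (metis rev_rev_ident)
  finally show ?thesis
    unfolding syn_cong_def by simp
qed

lemma syn_monoid_mult_classes:
  "syn_cong K `` {v} \<otimes>\<^bsub>syn_monoid K\<^esub> syn_cong K `` {w} = syn_cong K `` {v @ w}"
proof -
  let ?x = "SOME x. x \<in> syn_cong K `` {v}" and ?y = "SOME y. y \<in> syn_cong K `` {w}"
  have "?x \<in> syn_cong K `` {v}" "?y \<in> syn_cong K `` {w}"
    by (rule someI, rule equiv_class_self[OF equiv_syn_cong], simp)+
  then have "(v, ?x) \<in> syn_cong K" "(w, ?y) \<in> syn_cong K"
    by simp_all
  then have "(v @ w, ?x @ ?y) \<in> syn_cong K"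
    using syn_cong_append_left syn_cong_append_right equiv_syn_cong
    unfolding equiv_def Relation.trans_def by blast
  then show ?thesis
    unfolding syn_monoid_def by (simp add: equiv_class_eq[OF equiv_syn_cong])
qed

lemma iso_syn_monoid_iff:
  fixes M :: "('m, 'b) monoid_scheme" and e :: "'a list \<Rightarrow> 'm"
  assumes carrier: "carrier M = range e"
    and mult: "\<And>v w. e v \<otimes>\<^bsub>M\<^esub> e w = e (v @ w)"
    and kernel: "\<And>v w. e v = e w \<Longrightarrow> (v, w) \<in> syn_cong K"
    and finite: "finite (carrier M)"
  shows "M \<cong> syn_monoid K \<longleftrightarrow> (\<forall>v w. (v, w) \<in> syn_cong K \<longrightarrow> e v = e w)"
proof -
  define \<phi> where "\<phi> f = syn_cong K `` {inv_into UNIV e f}" for f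
  have \<phi>_e: "\<phi> (e w) = syn_cong K `` {w}" for w
    using kernel[of "inv_into UNIV e (e w)" w] f_inv_into_f[of "e w" e UNIV]
    unfolding \<phi>_def by (simp add: equiv_class_eq[OF equiv_syn_cong])
  have image: "\<phi> ` carrier M = carrier (syn_monoid K)"
    by (auto simp: carrier image_image \<phi>_e syn_monoid_def quotient_def)
  have hom: "\<phi> \<in> hom M (syn_monoid K)"
    using image unfolding hom_def carrier by (auto simp: mult \<phi>_e syn_monoid_mult_classes)
  have inj_iff: "inj_on \<phi> (carrier M) \<longleftrightarrow> (\<forall>v w. (v, w) \<in> syn_cong K \<longrightarrow> e v = e w)"
    unfolding carrier inj_on_def
    by (auto simp: \<phi>_e eq_equiv_class_iff[OF equiv_syn_cong])
  show ?thesis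
  proof
    assume "M \<cong> syn_monoid K"
    then have "card (carrier M) = card (carrier (syn_monoid K))"
      unfolding is_iso_def iso_def by (auto dest: bij_betw_same_card)
    with image finite have "inj_on \<phi> (carrier M)"
      by (simp add: inj_on_iff_eq_card)
    with inj_iff show "\<forall>v w. (v, w) \<in> syn_cong K \<longrightarrow> e v = e w"
      by blast
  next
    assume "\<forall>v w. (v, w) \<in> syn_cong K \<longrightarrow> e v = e w"
    with inj_iff hom image have "\<phi> \<in> iso M (syn_monoid K)"
      unfolding iso_def bij_betw_def by blast
    then show "M \<cong> syn_monoid K"
      by (rule is_isoI)
  qed
qed

lemma BLRQ_respects_syn_cong: "X \<in> BLRQ L \<Longrightarrow> (\<lambda>u. u \<in> X) respects syn_cong L"
  unfolding congruent_def
proof (induction X rule: BLRQ.induct)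
  case (quot u v)
  show ?case
    unfolding syn_cong_def by auto
qed auto

lemma BLRQ_Int: "X \<in> BLRQ L \<Longrightarrow> Y \<in> BLRQ L \<Longrightarrow> X \<inter> Y \<in> BLRQ L"
  using BLRQ.compl[OF BLRQ.union[OF BLRQ.compl BLRQ.compl]] by simp

lemma BLRQ_Inter: "finite A \<Longrightarrow> A \<subseteq> BLRQ L \<Longrightarrow> \<Inter>A \<in> BLRQ L"
proof (induction A rule: finite_induct)
  case empty
  show ?case
    using BLRQ.compl[OF BLRQ.empty] by simp
qed (simp add: BLRQ_Int)

lemma BLRQ_Union: "finite A \<Longrightarrow> A \<subseteq> BLRQ L \<Longrightarrow> \<Union>A \<in> BLRQ L"
  by (induction A rule: finite_induct) (auto intro: BLRQ.intros)

lemma BLRQ_if_respects_syn_cong: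
  assumes finite: "finite {{w. u @ w @ v \<in> L} | u v. True}"
    and respects: "(\<lambda>u. u \<in> X) respects syn_cong L"
  shows "X \<in> BLRQ L"
proof -
  define Q where "Q = {{w. u @ w @ v \<in> L} | u v. True}"
  define cell where "cell S = \<Inter>((\<lambda>P. if P \<in> S then P else - P) ` Q)" for S
  define atom where "atom w = cell {P \<in> Q. w \<in> P}" for w
  have "cell S \<in> BLRQ L" for S
    unfolding cell_def
    by (rule BLRQ_Inter) (use finite in \<open>auto simp: Q_def intro: BLRQ.intros\<close>)
  then have atoms_BLRQ: "atom ` X \<subseteq> BLRQ L"
    unfolding atom_def by blast
  have "finite (atom ` X)"
  proof (rule finite_subset)
    show "atom ` X \<subseteq> cell ` Pow Q"
      unfolding atom_def by blast
    show "finite (cell ` Pow Q)"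
      using finite unfolding Q_def by simp
  qed
  have atom_syn_cong: "(v, w) \<in> syn_cong L" if "v \<in> atom w" for v w
    unfolding syn_cong_def
  proof clarify
    fix x y
    let ?P = "{z. x @ z @ y \<in> L}"
    have "?P \<in> Q"
      unfolding Q_def by blast
    with that have "v \<in> (if ?P \<in> {P \<in> Q. w \<in> P} then ?P else - ?P)"
      unfolding atom_def cell_def by blast
    then show "x @ v @ y \<in> L \<longleftrightarrow> x @ w @ y \<in> L"
      using \<open>?P \<in> Q\<close> by (auto split: if_splits)
  qed
  have "X = \<Union>(atom ` X)"
  proof
    show "X \<subseteq> \<Union>(atom ` X)"
      unfolding atom_def cell_def by auto
    show "\<Union>(atom ` X) \<subseteq> X"
      using atom_syn_cong respects unfolding congruent_def by blast
  qed
  with \<open>finite (atom ` X)\<close> atoms_BLRQ show ?thesis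
    using BLRQ_Union by metis
qed

lemma subatomic_iff_respects_syn_cong:
  assumes "nfa N"
  shows "subatomic N \<longleftrightarrow> (\<forall>q. (\<lambda>u. u \<in> state_lang N q) respects syn_cong (nfa_lang N))"
proof
  assume subatomic: "subatomic N"
  show "\<forall>q. (\<lambda>u. u \<in> state_lang N q) respects syn_cong (nfa_lang N)"
  proof
    fix q
    show "(\<lambda>u. u \<in> state_lang N q) respects syn_cong (nfa_lang N)"
    proof (cases "q \<in> states N")
      case True
      with subatomic show ?thesis
        unfolding subatomic_def by (blast intro: BLRQ_respects_syn_cong)
    next
      case False
      then show ?thesis
        using state_lang_notin_states[OF assms] unfolding congruent_def by simp
    qed
  qed
next
  assume "\<forall>q. (\<lambda>u. u \<in> state_lang N q) respects syn_cong (nfa_lang N)"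
  then show "subatomic N"
    unfolding subatomic_def
    by (blast intro: BLRQ_if_respects_syn_cong[OF finite_quotients_nfa_lang[OF assms]])
qed

definition trans_elem :: "('q, 'a) dfa \<Rightarrow> 'a list \<Rightarrow> 'q \<Rightarrow> 'q" where
  "trans_elem D w = restrict (dsteps D w) (dstates D)"

lemma carrier_trans_monoid: "carrier (trans_monoid D) = range (trans_elem D)"
  unfolding trans_monoid_def trans_elem_def by auto

lemma restrict_eq_restrict_iff: "restrict f A = restrict g A \<longleftrightarrow> (\<forall>x\<in>A. f x = g x)"
  by (auto simp: fun_eq_iff)

lemma dsteps_in_dstates:
  "(\<And>a. dtrans D a \<in> dstates D \<rightarrow> dstates D) \<Longrightarrow> X \<in> dstates D \<Longrightarrow> dsteps D w X \<in> dstates D"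
  by (induction w arbitrary: X) (auto simp: dsteps_def)

lemma trans_elem_mult:
  assumes "\<And>a. dtrans D a \<in> dstates D \<rightarrow> dstates D"
  shows "trans_elem D v \<otimes>\<^bsub>trans_monoid D\<^esub> trans_elem D w = trans_elem D (v @ w)"
proof -
  have "restrict (trans_elem D w \<circ> trans_elem D v) (dstates D) = trans_elem D (v @ w)"
    unfolding trans_elem_def restrict_eq_restrict_iff
    by (simp add: dsteps_in_dstates[OF assms]) (simp add: dsteps_def)
  then show ?thesis
    unfolding trans_monoid_def by simp
qed

lemma finite_carrier_trans_monoid:
  assumes "finite (dstates D)" and "\<And>a. dtrans D a \<in> dstates D \<rightarrow> dstates D"
  shows "finite (carrier (trans_monoid D))"
proof (rule finite_subset)
  show "carrier (trans_monoid D) \<subseteq> dstates D \<rightarrow>\<^sub>E dstates D"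
    using dsteps_in_dstates[OF assms(2)] unfolding carrier_trans_monoid trans_elem_def by auto
  show "finite (dstates D \<rightarrow>\<^sub>E dstates D)"
    using assms(1) by (simp add: finite_PiE)
qed

lemma dsteps_rsc: "dsteps (rsc M) w X = steps M w X"
  by (simp add: dsteps_def steps_def rsc_def)

lemma dstates_rsc: "dstates (rsc M) = range (\<lambda>x. steps M x (init M))"
  by (auto simp: rsc_def)

lemma dtrans_rsc_closed: "dtrans (rsc M) a \<in> dstates (rsc M) \<rightarrow> dstates (rsc M)"
proof
  fix X
  assume "X \<in> dstates (rsc M)"
  then obtain x where "X = steps M x (init M)"
    unfolding dstates_rsc by blast
  then have "dtrans (rsc M) a X = steps M (x @ [a]) (init M)"
    by (simp add: rsc_def steps_append)
  then show "dtrans (rsc M) a X \<in> dstates (rsc M)"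
    unfolding dstates_rsc by blast
qed

lemma finite_dstates_rsc:
  assumes "nfa M"
  shows "finite (dstates (rsc M))"
proof (rule finite_subset)
  have "init M \<subseteq> states M"
    using assms unfolding nfa_def by blast
  then show "dstates (rsc M) \<subseteq> Pow (states M)"
    unfolding dstates_rsc using steps_subset_states[OF assms] by blast
  show "finite (Pow (states M))"
    using assms unfolding nfa_def by simp
qed

lemma trans_elem_rsc_rev_nfa_eq_iff:
  "trans_elem (rsc (rev_nfa N)) v = trans_elem (rsc (rev_nfa N)) w \<longleftrightarrow>
     (\<forall>q y. rev v @ y \<in> state_lang N q \<longleftrightarrow> rev w @ y \<in> state_lang N q)"
proof -
  have reached:
    "steps (rev_nfa N) v (steps (rev_nfa N) x (final N)) = {q. rev v @ rev x \<in> state_lang N q}"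
    for v x
    using steps_append[of "rev_nfa N" x v] by (simp add: steps_rev_nfa state_lang_def)
  have "trans_elem (rsc (rev_nfa N)) v = trans_elem (rsc (rev_nfa N)) w \<longleftrightarrow>
      (\<forall>x. steps (rev_nfa N) v (steps (rev_nfa N) x (final N)) =
        steps (rev_nfa N) w (steps (rev_nfa N) x (final N)))"
    unfolding trans_elem_def restrict_eq_restrict_iff dsteps_rsc dstates_rsc
    by (simp add: rev_nfa_def)
  also have "\<dots> \<longleftrightarrow> (\<forall>x q. rev v @ rev x \<in> state_lang N q \<longleftrightarrow> rev w @ rev x \<in> state_lang N q)"
    unfolding reached by blast
  also have "\<dots> \<longleftrightarrow> (\<forall>q y. rev v @ y \<in> state_lang N q \<longleftrightarrow> rev w @ y \<in> state_lang N q)"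
    by (metis rev_rev_ident)
  finally show ?thesis .
qed

lemma syn_cong_rev_if_trans_elem_eq:
  assumes "trans_elem (rsc (rev_nfa N)) v = trans_elem (rsc (rev_nfa N)) w"
  shows "(v, w) \<in> syn_cong (rev ` nfa_lang N)"
proof -
  have "(rev v, rev w) \<in> syn_cong (nfa_lang N)"
    unfolding syn_cong_def
  proof clarify
    fix x y
    have "rev v @ y \<in> state_lang N q \<longleftrightarrow> rev w @ y \<in> state_lang N q" for q
      using assms unfolding trans_elem_rsc_rev_nfa_eq_iff by blast
    then show "x @ rev v @ y \<in> nfa_lang N \<longleftrightarrow> x @ rev w @ y \<in> nfa_lang N"
      unfolding append_in_nfa_lang_iff by blast
  qed
  then show ?thesis
    unfolding syn_cong_rev_image .
qed

lemma trans_elem_rsc_rev_nfa_respects_iff: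
  "(\<forall>v w. (v, w) \<in> syn_cong (rev ` nfa_lang N) \<longrightarrow>
      trans_elem (rsc (rev_nfa N)) v = trans_elem (rsc (rev_nfa N)) w) \<longleftrightarrow>
   (\<forall>q. (\<lambda>u. u \<in> state_lang N q) respects syn_cong (nfa_lang N))"
proof
  assume kernel: "\<forall>v w. (v, w) \<in> syn_cong (rev ` nfa_lang N) \<longrightarrow>
      trans_elem (rsc (rev_nfa N)) v = trans_elem (rsc (rev_nfa N)) w"
  show "\<forall>q. (\<lambda>u. u \<in> state_lang N q) respects syn_cong (nfa_lang N)"
    unfolding congruent_def
  proof (intro allI ballI, clarify)
    fix q u u'
    assume "(u, u') \<in> syn_cong (nfa_lang N)"
    then have "(rev u, rev u') \<in> syn_cong (rev ` nfa_lang N)"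
      unfolding syn_cong_rev_image by simp
    with kernel have "u @ [] \<in> state_lang N q \<longleftrightarrow> u' @ [] \<in> state_lang N q"
      unfolding trans_elem_rsc_rev_nfa_eq_iff by (metis rev_rev_ident)
    then show "(u \<in> state_lang N q) = (u' \<in> state_lang N q)"
      by simp
  qed
next
  assume "\<forall>q. (\<lambda>u. u \<in> state_lang N q) respects syn_cong (nfa_lang N)"
  then show "\<forall>v w. (v, w) \<in> syn_cong (rev ` nfa_lang N) \<longrightarrow>
      trans_elem (rsc (rev_nfa N)) v = trans_elem (rsc (rev_nfa N)) w"
    unfolding trans_elem_rsc_rev_nfa_eq_iff syn_cong_rev_image congruent_def
    using syn_cong_append_right by blast
qed

theorem theorem4p12:
  fixes N :: "('s, 'a::finite) nfa"
  assumes "nfa N"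
  shows "subatomic N \<longleftrightarrow>
           trans_monoid (rsc (rev_nfa N)) \<cong> syn_monoid (rev ` nfa_lang N)"
proof -
  let ?D = "rsc (rev_nfa N)"
  have "trans_monoid ?D \<cong> syn_monoid (rev ` nfa_lang N) \<longleftrightarrow>
      (\<forall>v w. (v, w) \<in> syn_cong (rev ` nfa_lang N) \<longrightarrow> trans_elem ?D v = trans_elem ?D w)"
    using carrier_trans_monoid trans_elem_mult[OF dtrans_rsc_closed] syn_cong_rev_if_trans_elem_eq
      finite_carrier_trans_monoid[OF finite_dstates_rsc[OF nfa_rev_nfa[OF assms]] dtrans_rsc_closed]
    by (rule iso_syn_monoid_iff)
  then show ?thesis
    unfolding trans_elem_rsc_rev_nfa_respects_iff subatomic_iff_respects_syn_cong[OF assms] by simp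
qed

end
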